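(* Let $A$ be a nonempty set of positive integers, let $s\in A$ and let $n$ be a positive integer. Then $$N^p_A(n)-N^p_A(n-s)=p_A(n-s)+N^p_{A\setminus\{s\}}(n).$$
   Context: For a set $B$ of positive integers, $N^p_B(m)$ is the total number of parts, summed over all partitions of $m$ with parts in $B$, and $p_B(m)$ is the number of partitions of $m$ with parts in $B$. Conventions: $p_B(0)=1$, $N^p_B(0)=0$, and $p_B(m)=N^p_B(m)=0$ for $m<0$; $N^p_{\emptyset}\equiv 0$. *)

theory Defs
  imports Main "HOL-Library.Multiset"
begin

definition partitions_in :: "nat set \<Rightarrow> nat \<Rightarrow> nat multiset set" where
  "partitions_in B m = {M. set_mset M \<subseteq> B \<and> (\<forall>x\<in>#M. 0 < x) \<and> sum_mset M = m}"

definition p_part :: "nat set \<Rightarrow> int \<Rightarrow> int" where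
  "p_part B m = (if m < 0 then 0 else int (card (partitions_in B (nat m))))"

definition Np_part :: "nat set \<Rightarrow> int \<Rightarrow> int" where
  "Np_part B m = (if m < 0 then 0 else int (\<Sum>M\<in>partitions_in B (nat m). size M))"

end

theory Submission
  imports Defs
begin

text \<open>Split the partitions of \<open>n\<close> with parts in \<open>A\<close> according to whether \<open>s\<close> occurs as a part.
  Those without \<open>s\<close> are exactly the partitions with parts in \<open>A - {s}\<close>; removing one copy of \<open>s\<close>
  is a bijection from those with \<open>s\<close> onto the partitions of \<open>n - s\<close>, and it lowers the number of
  parts by one. Hence the partitions containing \<open>s\<close> have \<open>N\<^sup>p\<^sub>A(n - s) + p\<^sub>A(n - s)\<close> parts in total.\<close>

lemma size_le_sum_mset_if_pos:
  fixes M :: "nat multiset"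
  assumes "\<forall>x\<in>#M. 0 < x"
  shows "size M \<le> sum_mset M"
  using assms by (induction M) auto

lemma finite_partitions_in: "finite (partitions_in B m)"
proof (rule finite_subset)
  show "partitions_in B m \<subseteq> (\<Union>k\<le>m. multisets_of_size {0..m} k)"
  proof
    fix M assume "M \<in> partitions_in B m"
    hence pos: "\<forall>x\<in>#M. 0 < x" and sum: "sum_mset M = m"
      by (auto simp: partitions_in_def)
    have "size M \<le> m"
      using size_le_sum_mset_if_pos[OF pos] sum by simp
    moreover have "set_mset M \<subseteq> {0..m}"
      using sum by (auto dest!: multi_member_split)
    ultimately show "M \<in> (\<Union>k\<le>m. multisets_of_size {0..m} k)"
      by (auto simp: multisets_of_size_def)
  qed
qed auto

lemma partitions_in_without_part:
  "{M \<in> partitions_in B m. s \<notin># M} = partitions_in (B - {s}) m"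
  by (auto simp: partitions_in_def)

lemma partitions_in_with_part:
  assumes "s \<in> B" and "0 < s" and "s \<le> m"
  shows "{M \<in> partitions_in B m. s \<in># M} = add_mset s ` partitions_in B (m - s)"
proof
  show "{M \<in> partitions_in B m. s \<in># M} \<subseteq> add_mset s ` partitions_in B (m - s)"
  proof
    fix M assume "M \<in> {M \<in> partitions_in B m. s \<in># M}"
    then obtain M' where "M = add_mset s M'" and "M \<in> partitions_in B m"
      by (auto dest!: multi_member_split)
    then show "M \<in> add_mset s ` partitions_in B (m - s)"
      by (auto simp: partitions_in_def intro!: image_eqI[where x = M'])
  qed
  show "add_mset s ` partitions_in B (m - s) \<subseteq> {M \<in> partitions_in B m. s \<in># M}"
    using assms by (auto simp: partitions_in_def)
qed

lemma partitions_in_with_part_empty: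
  assumes "m < s"
  shows "{M \<in> partitions_in B m. s \<in># M} = {}"
  using assms by (auto simp: partitions_in_def dest!: multi_member_split)

lemma sum_size_partitions_in_split:
  "(\<Sum>M\<in>partitions_in B m. size M)
     = (\<Sum>M\<in>{M \<in> partitions_in B m. s \<in># M}. size M) + (\<Sum>M\<in>partitions_in (B - {s}) m. size M)"
proof -
  have "partitions_in B m = {M \<in> partitions_in B m. s \<in># M} \<union> {M \<in> partitions_in B m. s \<notin># M}"
    by blast
  then show ?thesis
    unfolding partitions_in_without_part[symmetric]
    by (metis (no_types, lifting) finite_partitions_in finite_Un sum.union_disjoint
        disjoint_iff mem_Collect_eq)
qed

lemma sum_size_partitions_in_with_part:
  assumes "s \<in> B" and "0 < s"
  shows "int (\<Sum>M\<in>{M \<in> partitions_in B m. s \<in># M}. size M)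
           = Np_part B (int m - int s) + p_part B (int m - int s)"
proof (cases "s \<le> m")
  case True
  let ?Q = "partitions_in B (m - s)"
  have "(\<Sum>M\<in>{M \<in> partitions_in B m. s \<in># M}. size M) = (\<Sum>M\<in>?Q. size (add_mset s M))"
    unfolding partitions_in_with_part[OF assms True] by (simp add: sum.reindex inj_on_def)
  also have "\<dots> = (\<Sum>M\<in>?Q. size M) + card ?Q"
    by (simp only: size_add_mset Suc_eq_plus1 sum.distrib card_eq_sum)
  finally have parts: "(\<Sum>M\<in>{M \<in> partitions_in B m. s \<in># M}. size M)
                        = (\<Sum>M\<in>?Q. size M) + card ?Q" .
  have "nat (int m - int s) = m - s"
    using True by simp
  with parts True show ?thesis
    by (simp add: Np_part_def p_part_def)
next
  case False
  then show ?thesis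
    by (simp add: partitions_in_with_part_empty Np_part_def p_part_def)
qed

theorem theorem5:
  fixes A :: "nat set" and s n :: nat
  assumes "A \<noteq> {}" and "\<forall>a\<in>A. 0 < a" and "s \<in> A" and "0 < n"
  shows "Np_part A (int n) - Np_part A (int n - int s)
           = p_part A (int n - int s) + Np_part (A - {s}) (int n)"
proof -
  have "0 < s"
    using assms(2,3) by blast
  have "Np_part A (int n)
          = int (\<Sum>M\<in>{M \<in> partitions_in A n. s \<in># M}. size M) + Np_part (A - {s}) (int n)"
    by (simp add: Np_part_def sum_size_partitions_in_split[of A n s])
  also have "\<dots> = Np_part A (int n - int s) + p_part A (int n - int s) + Np_part (A - {s}) (int n)"
    using sum_size_partitions_in_with_part[OF assms(3) \<open>0 < s\<close>] by simp
  finally show ?thesis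
    by simp
qed

end
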